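(* Let $(L,[\cdot,\cdot],\alpha)$ be a Hom-Lie algebra over a field $F$ and let $\mu:L\to[0,1]$ be a fuzzy subset of $L$. Then the following are equivalent: (i) $\mu$ is a fuzzy Hom-Lie ideal of $L$; (ii) for every $t\in\mathrm{Im}(\mu)$ such that the strong upper level set $U(\mu^>,t)=\{x\in L:\mu(x)>t\}$ is nonempty, $U(\mu^>,t)$ is a Hom-Lie ideal of $L$.
   Context: A Hom-Lie algebra over $F$ is a triple $(L,[\cdot,\cdot],\alpha)$ with $L$ an $F$-vector space, $\alpha:L\to L$ linear and $[\cdot,\cdot]:L\times L\to L$ bilinear, such that $[x,y]=-[y,x]$ and $[\alpha(x),[y,z]]+[\alpha(y),[z,x]]+[\alpha(z),[x,y]]=0$ for all $x,y,z\in L$. A Hom-Lie subalgebra is a subspace $H$ with $\alpha(H)\subseteq H$ and $[x,y]\in H$ for all $x,y\in H$; it is a Hom-Lie ideal if moreover $[x,y]\in H$ for all $x\in H$, $y\in L$. A fuzzy subset of $L$ is a map $\mu:L\to[0,1]$. Writing $a\wedge b=\min\{a,b\}$, $a\vee b=\max\{a,b\}$, $\mu$ is a fuzzy Hom-Lie ideal if for all $x,y\in L$, $c\in F$: $\mu(x+y)\ge\mu(x)\wedge\mu(y)$, $\mu(cx)\ge\mu(x)$, $\mu([x,y])\ge\mu(x)\vee\mu(y)$, and $\mu(\alpha(x))\ge\mu(x)$. *)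

theory Defs
  imports Complex_Main
begin

definition hom_lie_algebra ::
  "('f::field \<Rightarrow> 'v::ab_group_add \<Rightarrow> 'v) \<Rightarrow> ('v \<Rightarrow> 'v \<Rightarrow> 'v) \<Rightarrow> ('v \<Rightarrow> 'v) \<Rightarrow> bool" where
  "hom_lie_algebra scale br alpha \<longleftrightarrow>
     Vector_Spaces.vector_space scale \<and>
     Vector_Spaces.linear scale scale alpha \<and>
     (\<forall>x. Vector_Spaces.linear scale scale (br x)) \<and>
     (\<forall>y. Vector_Spaces.linear scale scale (\<lambda>x. br x y)) \<and>
     (\<forall>x y. br x y = - br y x) \<and>
     (\<forall>x y z. br (alpha x) (br y z) + br (alpha y) (br z x) + br (alpha z) (br x y) = 0)"

definition hom_lie_subalgebra ::
  "('f::field \<Rightarrow> 'v::ab_group_add \<Rightarrow> 'v) \<Rightarrow> ('v \<Rightarrow> 'v \<Rightarrow> 'v) \<Rightarrow> ('v \<Rightarrow> 'v) \<Rightarrow> 'v set \<Rightarrow> bool" where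
  "hom_lie_subalgebra scale br alpha H \<longleftrightarrow>
     module.subspace scale H \<and> alpha ` H \<subseteq> H \<and> (\<forall>x\<in>H. \<forall>y\<in>H. br x y \<in> H)"

definition hom_lie_ideal ::
  "('f::field \<Rightarrow> 'v::ab_group_add \<Rightarrow> 'v) \<Rightarrow> ('v \<Rightarrow> 'v \<Rightarrow> 'v) \<Rightarrow> ('v \<Rightarrow> 'v) \<Rightarrow> 'v set \<Rightarrow> bool" where
  "hom_lie_ideal scale br alpha H \<longleftrightarrow>
     hom_lie_subalgebra scale br alpha H \<and> (\<forall>x\<in>H. \<forall>y. br x y \<in> H)"

definition fuzzy_subset :: "('v \<Rightarrow> real) \<Rightarrow> bool" where
  "fuzzy_subset mu \<longleftrightarrow> (\<forall>x. 0 \<le> mu x \<and> mu x \<le> 1)"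

definition fuzzy_hom_lie_ideal ::
  "('f::field \<Rightarrow> 'v::ab_group_add \<Rightarrow> 'v) \<Rightarrow> ('v \<Rightarrow> 'v \<Rightarrow> 'v) \<Rightarrow> ('v \<Rightarrow> 'v) \<Rightarrow> ('v \<Rightarrow> real) \<Rightarrow> bool" where
  "fuzzy_hom_lie_ideal scale br alpha mu \<longleftrightarrow>
     fuzzy_subset mu \<and>
     (\<forall>x y. mu (x + y) \<ge> min (mu x) (mu y)) \<and>
     (\<forall>c x. mu (scale c x) \<ge> mu x) \<and>
     (\<forall>x y. mu (br x y) \<ge> max (mu x) (mu y)) \<and>
     (\<forall>x. mu (alpha x) \<ge> mu x)"

definition strong_level_set :: "('v \<Rightarrow> real) \<Rightarrow> real \<Rightarrow> 'v set" where
  "strong_level_set mu t = {x. mu x > t}"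

end

theory Submission
  imports Defs
begin

text \<open>A fuzzy set is recovered from its strong level sets: \<mu> x \<le> \<mu> y as soon as every strong
  level set containing x contains y, and it suffices to test the level \<mu> y itself, which is a
  value of \<mu> and whose strong level set never contains y. Each defining inequality of a fuzzy
  Hom-Lie ideal is thus equivalent to a closure property of the strong level sets; for the bracket
  in its second argument, closure comes from antisymmetry.\<close>

lemma module_if_hom_lie_algebra:
  "hom_lie_algebra scale br alpha \<Longrightarrow> module scale"
  unfolding hom_lie_algebra_def by (simp add: vector_space_def module_def)

lemma hom_lie_ideal_bracket_right:
  assumes "module scale" and "\<And>x y. br x y = - br y x"
    and "hom_lie_ideal scale br alpha H" and "y \<in> H"
  shows "br x y \<in> H"
proof -
  have "module.subspace scale H" and "br y x \<in> H"
    using assms(3,4) unfolding hom_lie_ideal_def hom_lie_subalgebra_def by auto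
  then have "- br y x \<in> H" by (rule module.subspace_neg[OF assms(1)])
  then show ?thesis by (simp add: assms(2)[of x y])
qed

lemma strong_level_set_hom_lie_ideal:
  assumes "module scale" and ideal: "fuzzy_hom_lie_ideal scale br alpha mu"
    and "strong_level_set mu t \<noteq> {}"
  shows "hom_lie_ideal scale br alpha (strong_level_set mu t)"
proof -
  from assms(3) obtain x where "mu x > t" unfolding strong_level_set_def by auto
  moreover have "mu x \<le> mu (scale 0 x)" using ideal unfolding fuzzy_hom_lie_ideal_def by blast
  ultimately have "mu 0 > t" by (simp add: module.scale_zero_left[OF assms(1)])
  moreover have "mu x > t \<Longrightarrow> mu y > t \<Longrightarrow> mu (x + y) > t" for x y
    using ideal unfolding fuzzy_hom_lie_ideal_def by (meson less_le_trans min_less_iff_conj not_le)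
  moreover have "mu x > t \<Longrightarrow> mu (scale c x) > t" for c x
    using ideal unfolding fuzzy_hom_lie_ideal_def by (meson less_le_trans)
  moreover have "mu x > t \<Longrightarrow> mu (alpha x) > t" for x
    using ideal unfolding fuzzy_hom_lie_ideal_def by (meson less_le_trans)
  moreover have "mu x > t \<Longrightarrow> mu (br x y) > t" for x y
    using ideal unfolding fuzzy_hom_lie_ideal_def by (meson less_le_trans max.cobounded1)
  ultimately show ?thesis
    unfolding hom_lie_ideal_def hom_lie_subalgebra_def module.subspace_def[OF assms(1)]
      strong_level_set_def
    by auto
qed

lemma le_if_strong_level_sets_mono:
  assumes "\<And>t. t \<in> range mu \<Longrightarrow> x \<in> strong_level_set mu t \<Longrightarrow> y \<in> strong_level_set mu t"
  shows "mu x \<le> mu y"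
  using assms[of "mu y"] unfolding strong_level_set_def by force

lemma min_le_if_strong_level_sets_closed:
  assumes "\<And>t. t \<in> range mu \<Longrightarrow> x \<in> strong_level_set mu t \<Longrightarrow> y \<in> strong_level_set mu t
             \<Longrightarrow> z \<in> strong_level_set mu t"
  shows "min (mu x) (mu y) \<le> mu z"
  using assms[of "mu z"] unfolding strong_level_set_def by force

lemma fuzzy_hom_lie_ideal_if_strong_level_sets:
  assumes "module scale" and anticomm: "\<And>x y. br x y = - br y x" and "fuzzy_subset mu"
    and levels: "\<forall>t \<in> range mu. strong_level_set mu t \<noteq> {} \<longrightarrow>
                   hom_lie_ideal scale br alpha (strong_level_set mu t)"
  shows "fuzzy_hom_lie_ideal scale br alpha mu"
proof -
  have ideal: "hom_lie_ideal scale br alpha (strong_level_set mu t)"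
    if "t \<in> range mu" and "x \<in> strong_level_set mu t" for t x
    using levels that by blast
  have subspace: "module.subspace scale (strong_level_set mu t)"
    and alpha_closed: "alpha x \<in> strong_level_set mu t"
    and bracket_closed: "br x y \<in> strong_level_set mu t"
    if "t \<in> range mu" and "x \<in> strong_level_set mu t" for t x y
    using ideal[OF that] that unfolding hom_lie_ideal_def hom_lie_subalgebra_def by auto
  have "min (mu x) (mu y) \<le> mu (x + y)" for x y
    by (rule min_le_if_strong_level_sets_closed)
      (blast intro: module.subspace_add[OF assms(1) subspace])
  moreover have "mu x \<le> mu (scale c x)" for c x
    by (rule le_if_strong_level_sets_mono) (blast intro: module.subspace_scale[OF assms(1) subspace])
  moreover have "mu x \<le> mu (br x y)" for x y
    by (rule le_if_strong_level_sets_mono) (rule bracket_closed)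
  moreover have "mu y \<le> mu (br x y)" for x y
    by (rule le_if_strong_level_sets_mono)
      (blast intro: hom_lie_ideal_bracket_right[OF assms(1) anticomm ideal])
  moreover have "mu x \<le> mu (alpha x)" for x
    by (rule le_if_strong_level_sets_mono) (rule alpha_closed)
  ultimately show ?thesis
    unfolding fuzzy_hom_lie_ideal_def using assms(3) by simp
qed

theorem theorem4p4:
  fixes scale :: "'f::field \<Rightarrow> 'v::ab_group_add \<Rightarrow> 'v"
    and br :: "'v \<Rightarrow> 'v \<Rightarrow> 'v" and alpha :: "'v \<Rightarrow> 'v" and mu :: "'v \<Rightarrow> real"
  assumes "hom_lie_algebra scale br alpha"
    and "fuzzy_subset mu"
  shows "fuzzy_hom_lie_ideal scale br alpha mu \<longleftrightarrow>
         (\<forall>t \<in> range mu. strong_level_set mu t \<noteq> {} \<longrightarrow>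
             hom_lie_ideal scale br alpha (strong_level_set mu t))"
proof -
  have module: "module scale" using assms(1) by (rule module_if_hom_lie_algebra)
  have anticomm: "br x y = - br y x" for x y
    using assms(1) unfolding hom_lie_algebra_def by blast
  show ?thesis
  proof
    assume "fuzzy_hom_lie_ideal scale br alpha mu"
    then show "\<forall>t \<in> range mu. strong_level_set mu t \<noteq> {} \<longrightarrow>
                 hom_lie_ideal scale br alpha (strong_level_set mu t)"
      using strong_level_set_hom_lie_ideal[OF module] by blast
  next
    assume "\<forall>t \<in> range mu. strong_level_set mu t \<noteq> {} \<longrightarrow>
              hom_lie_ideal scale br alpha (strong_level_set mu t)"
    then show "fuzzy_hom_lie_ideal scale br alpha mu"
      by (rule fuzzy_hom_lie_ideal_if_strong_level_sets[OF module anticomm assms(2)])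
  qed
qed

end
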